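(* $d^2\,(d')^2=\delta^2\,(1-d^2)\,(d^2-\lambda^2)$.
   Context: Let $0<\kappa<1$ and $\lambda=\sqrt{1-\kappa^2}$. Let $F(\tfrac16,\tfrac56;\tfrac12;\cdot)$ denote the Gauss hypergeometric function. Define $u$ as a function of $\phi$ near $0$ by $u=\int_0^{\sin\phi}F(\tfrac16,\tfrac56;\tfrac12;\kappa^2t^2)\,\frac{dt}{\sqrt{1-t^2}}$; near the origin (fixing $0$) this inverts to a holomorphic function $u\mapsto\phi(u)$ with $\phi(0)=0$. Let $\psi$ be the holomorphic function near $0$ with $\psi(0)=0$ and $\sin\psi=\kappa\sin\phi$. Set $d=\cos\psi$ and $\delta=\phi'$, as functions of $u$ on a small disc about $0$; primes denote $d/du$. *)

theory Defs
  imports "HOL-Complex_Analysis.Complex_Analysis"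
begin

definition hyp2f1 :: "complex \<Rightarrow> complex \<Rightarrow> complex \<Rightarrow> complex \<Rightarrow> complex" where
  "hyp2f1 a b c z =
     (\<Sum>n. pochhammer a n * pochhammer b n / (pochhammer c n * fact n) * z ^ n)"

definition u_of_phi :: "real \<Rightarrow> complex \<Rightarrow> complex" where
  "u_of_phi \<kappa> \<phi> =
     contour_integral (linepath 0 (sin \<phi>))
       (\<lambda>t. hyp2f1 (1/6) (5/6) (1/2) ((of_real \<kappa>)\<^sup>2 * t\<^sup>2) / csqrt (1 - t\<^sup>2))"

end

theory Submission
  imports Defs
begin

text \<open>Only the relation \<open>sin \<psi> = \<kappa> sin \<phi>\<close> matters, not the hypergeometric integral
  defining \<open>\<phi>\<close>. Differentiating it gives \<open>cos \<psi> \<psi>' = \<kappa> cos \<phi> \<phi>'\<close>, so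
  \<open>d\<^sup>2 d'\<^sup>2 = sin\<^sup>2 \<psi> (cos \<psi> \<psi>')\<^sup>2 = sin\<^sup>2 \<psi> \<kappa>\<^sup>2 cos\<^sup>2 \<phi> \<delta>\<^sup>2\<close>, and the two factors are
  \<open>sin\<^sup>2 \<psi> = 1 - d\<^sup>2\<close> and \<open>\<kappa>\<^sup>2 cos\<^sup>2 \<phi> = \<kappa>\<^sup>2 - sin\<^sup>2 \<psi> = d\<^sup>2 - \<lambda>\<^sup>2\<close>.\<close>

lemma sin_eq_scaled_sin_on_imp_deriv_eq:
  fixes \<phi> \<psi> :: "'a::{real_normed_field,banach} \<Rightarrow> 'a"
  assumes "open S" "u \<in> S"
    and "(\<phi> has_field_derivative \<phi>') (at u)" "(\<psi> has_field_derivative \<psi>') (at u)"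
    and "\<And>v. v \<in> S \<Longrightarrow> sin (\<psi> v) = k * sin (\<phi> v)"
  shows "cos (\<psi> u) * \<psi>' = k * (cos (\<phi> u) * \<phi>')"
proof (rule DERIV_unique)
  have "((\<lambda>v. sin (\<psi> v)) has_field_derivative cos (\<psi> u) * \<psi>') (at u)"
    using assms(4) by (auto intro!: derivative_eq_intros)
  then show "((\<lambda>v. k * sin (\<phi> v)) has_field_derivative cos (\<psi> u) * \<psi>') (at u)"
    by (rule has_field_derivative_transform_within_open[OF _ assms(1,2)]) (simp add: assms(5))
  show "((\<lambda>v. k * sin (\<phi> v)) has_field_derivative k * (cos (\<phi> u) * \<phi>')) (at u)"
    using assms(3) by (auto intro!: derivative_eq_intros)
qed

lemma cos_squared_deriv_identity:
  fixes a b k a' b' :: "'a::{real_normed_field,banach}"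
  assumes sin_rel: "sin b = k * sin a" and deriv_rel: "cos b * b' = k * (cos a * a')"
  shows "(cos b)\<^sup>2 * (- sin b * b')\<^sup>2 = a'\<^sup>2 * (1 - (cos b)\<^sup>2) * ((cos b)\<^sup>2 - (1 - k\<^sup>2))"
proof -
  have sin_sq_b: "1 - (cos b)\<^sup>2 = (sin b)\<^sup>2"
    using sin_cos_squared_add[of b] by (simp add: algebra_simps)
  have cos_sq_a: "1 - (sin a)\<^sup>2 = (cos a)\<^sup>2"
    using sin_cos_squared_add[of a] by (simp add: algebra_simps)
  have "(cos b)\<^sup>2 - (1 - k\<^sup>2) = k\<^sup>2 * (1 - (sin a)\<^sup>2)"
    using sin_sq_b sin_rel by (simp add: power_mult_distrib algebra_simps)
  then have cos_sq_b: "(cos b)\<^sup>2 - (1 - k\<^sup>2) = k\<^sup>2 * (cos a)\<^sup>2"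
    by (simp only: cos_sq_a)
  have "(cos b)\<^sup>2 * (- sin b * b')\<^sup>2 = (sin b)\<^sup>2 * (cos b * b')\<^sup>2"
    by (simp add: power_mult_distrib)
  also have "\<dots> = (sin b)\<^sup>2 * (k\<^sup>2 * (cos a)\<^sup>2) * a'\<^sup>2"
    by (simp add: deriv_rel power_mult_distrib)
  also have "\<dots> = a'\<^sup>2 * (1 - (cos b)\<^sup>2) * ((cos b)\<^sup>2 - (1 - k\<^sup>2))"
    by (simp only: sin_sq_b cos_sq_b) (simp add: mult_ac)
  finally show ?thesis .
qed

lemma of_real_sqrt_one_minus_square:
  assumes "\<bar>x\<bar> \<le> 1"
  shows "(complex_of_real (sqrt (1 - x\<^sup>2)))\<^sup>2 = 1 - (of_real x)\<^sup>2"
proof -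
  have "x\<^sup>2 \<le> 1"
    using assms by (simp add: abs_square_le_1)
  then show ?thesis
    by (simp flip: of_real_power)
qed

theorem theorem3:
  fixes \<kappa> r :: real and \<phi> \<psi> :: "complex \<Rightarrow> complex"
  assumes "0 < \<kappa>" "\<kappa> < 1" "0 < r"
    and "\<phi> holomorphic_on ball 0 r" "\<phi> 0 = 0"
    and "\<And>u. u \<in> ball 0 r \<Longrightarrow> u_of_phi \<kappa> (\<phi> u) = u"
    and "\<psi> holomorphic_on ball 0 r" "\<psi> 0 = 0"
    and "\<And>u. u \<in> ball 0 r \<Longrightarrow> sin (\<psi> u) = of_real \<kappa> * sin (\<phi> u)"
    and "u \<in> ball 0 r"
  shows "let lam = complex_of_real (sqrt (1 - \<kappa>\<^sup>2));
             d = (\<lambda>v. cos (\<psi> v));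
             \<delta> = deriv \<phi>
         in (d u)\<^sup>2 * (deriv d u)\<^sup>2 = (\<delta> u)\<^sup>2 * (1 - (d u)\<^sup>2) * ((d u)\<^sup>2 - lam\<^sup>2)"
proof -
  have \<phi>_deriv: "(\<phi> has_field_derivative deriv \<phi> u) (at u)"
    using assms(4,10) holomorphic_derivI by blast
  have \<psi>_deriv: "(\<psi> has_field_derivative deriv \<psi> u) (at u)"
    using assms(7,10) holomorphic_derivI by blast
  have d_deriv: "deriv (\<lambda>v. cos (\<psi> v)) u = - sin (\<psi> u) * deriv \<psi> u"
    using \<psi>_deriv by (auto intro!: DERIV_imp_deriv derivative_eq_intros)
  have deriv_rel: "cos (\<psi> u) * deriv \<psi> u = of_real \<kappa> * (cos (\<phi> u) * deriv \<phi> u)"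
    using sin_eq_scaled_sin_on_imp_deriv_eq[OF _ assms(10) \<phi>_deriv \<psi>_deriv] assms(9) by simp
  have lam_sq: "(complex_of_real (sqrt (1 - \<kappa>\<^sup>2)))\<^sup>2 = 1 - (of_real \<kappa>)\<^sup>2"
    using assms(1,2) by (intro of_real_sqrt_one_minus_square) simp
  have "(cos (\<psi> u))\<^sup>2 * (- sin (\<psi> u) * deriv \<psi> u)\<^sup>2
      = (deriv \<phi> u)\<^sup>2 * (1 - (cos (\<psi> u))\<^sup>2) * ((cos (\<psi> u))\<^sup>2 - (1 - (of_real \<kappa>)\<^sup>2))"
    by (rule cos_squared_deriv_identity[OF assms(9)[OF assms(10)] deriv_rel])
  then show ?thesis
    by (simp only: Let_def d_deriv lam_sq)
qed

end
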